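(* Let $E$ and $\tilde{E}$ be the right and left algebraic eigenspaces of the nonlinear eigenvalues of $P(z)$ enclosed in $\Gamma$, respectively. Then (1) $E = F \mathcal{E}$, (2) $\tilde{E} = L\tilde{\mathcal{E}}$.
   Context: Let $A_0, \ldots, A_d \in \mathbb{C}^{n\times n}$ with $A_d \neq 0$ (not necessarily invertible), and let $P(z) = \sum_{j=0}^d z^j A_j$, with $\det P(z)$ not identically zero. A number $\lambda$ is a nonlinear eigenvalue if $P(\lambda)x=0$, $\tilde{x}^*P(\lambda)=0$ for nontrivial $x,\tilde{x}\in\mathbb{C}^n$. Ordered sequences $x_0,\ldots,x_{k-1}$ and $\tilde{x}_0,\ldots,\tilde{x}_{k-1}$ in $\mathbb{C}^n$ are right and left Jordan chains of $P$ at $\lambda$ if $\sum_{l=0}^j \frac{1}{l!}P^{(l)}(\lambda)x_{j-l}=0$ and $\sum_{l=0}^j \frac{1}{l!}\tilde{x}_{j-l}^*P^{(l)}(\lambda)=0$ for $j=0,\ldots,k-1$; the right (left) algebraic eigenspace of a set of nonlinear eigenvalues is the span of all right (left) nonlinear generalized eigenvectors (members of such chains) for all eigenvalues in the set. $\Gamma$ is a positively oriented, bounded, simple, closed contour not crossing any eigenvalue. The first companion linearization is the pencil $\mathcal{A} - z\mathcal{B}\in\mathbb{C}^{nd\times nd}$, written in $d\times d$ blocks of size $n\times n$: $\mathcal{A}$ has identity blocks $I$ on the first block superdiagonal in its first $d-1$ block rows, zeros elsewhere in those rows, and last block row $[A_0, A_1, \ldots, A_{d-1}]$; $\mathcal{B}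 = \mathrm{diag}(I, \ldots, I, -A_d)$. Let $F = [I\ 0\ \cdots\ 0]\in\mathbb{C}^{n\times nd}$ and $L = [0\ \cdots\ 0\ I]\in\mathbb{C}^{n\times nd}$ (compatible block partitioning). Let $\mathcal{E}$ and $\tilde{\mathcal{E}}$ denote the right and left algebraic eigenspaces of the linear pencil $z\mathcal{B}-\mathcal{A}$ associated to its eigenvalues enclosed within $\Gamma$, i.e. the ranges of the Riesz projections $\frac{1}{2\pi i}\oint_\Gamma (z\mathcal{B}-\mathcal{A})^{-1}\mathcal{B}\,dz$ and $\frac{1}{2\pi i}\oint_\Gamma (z\mathcal{B}-\mathcal{A})^{-*}\mathcal{B}^*\,dz$. For a matrix $M$ and subspace $Z$, $MZ=\{Mz: z\in Z\}$. *)

theory Defs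
  imports "HOL-Complex_Analysis.Complex_Analysis" "Jordan_Normal_Form.Determinant"
begin

text \<open>A matrix polynomial of size n and degree (at most) d is given by its coefficient
  matrices C 0, ..., C d (each n x n).  Evaluation P(z) = sum_j z^j C_j.\<close>
definition mp_eval :: "nat \<Rightarrow> nat \<Rightarrow> (nat \<Rightarrow> complex mat) \<Rightarrow> complex \<Rightarrow> complex mat" where
  "mp_eval n d C z = mat n n (\<lambda>(a,b). \<Sum>j\<le>d. z ^ j * C j $$ (a,b))"

definition mp_deriv :: "nat \<Rightarrow> nat \<Rightarrow> (nat \<Rightarrow> complex mat) \<Rightarrow> nat \<Rightarrow> complex \<Rightarrow> complex mat" where
  "mp_deriv n d C l z = mat n n (\<lambda>(a,b). \<Sum>j\<in>{l..d}. of_nat (fact j div fact (j - l)) * z ^ (j - l) * C j $$ (a,b))"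

definition right_jordan_chain ::
  "nat \<Rightarrow> nat \<Rightarrow> (nat \<Rightarrow> complex mat) \<Rightarrow> complex \<Rightarrow> nat \<Rightarrow> (nat \<Rightarrow> complex vec) \<Rightarrow> bool" where
  "right_jordan_chain n d C lam k x \<longleftrightarrow>
     (\<forall>j<k. x j \<in> carrier_vec n) \<and>
     (\<forall>j<k. (\<forall>a<n. (\<Sum>l\<le>j. (1 / fact l) * (\<Sum>b<n. mp_deriv n d C l lam $$ (a,b) * x (j - l) $ b)) = 0))"

definition left_jordan_chain ::
  "nat \<Rightarrow> nat \<Rightarrow> (nat \<Rightarrow> complex mat) \<Rightarrow> complex \<Rightarrow> nat \<Rightarrow> (nat \<Rightarrow> complex vec) \<Rightarrow> bool" where
  "left_jordan_chain n d C lam k x \<longleftrightarrow>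
     (\<forall>j<k. x j \<in> carrier_vec n) \<and>
     (\<forall>j<k. (\<forall>b<n. (\<Sum>l\<le>j. (1 / fact l) * (\<Sum>a<n. cnj (x (j - l) $ a) * mp_deriv n d C l lam $$ (a,b))) = 0))"

definition cspan :: "nat \<Rightarrow> complex vec set \<Rightarrow> complex vec set" where
  "cspan n S = {v. \<exists>m (c :: nat \<Rightarrow> complex) w. (\<forall>i<m. w i \<in> S) \<and>
                    v = vec n (\<lambda>a. \<Sum>i<m. c i * w i $ a)}"

text \<open>Nonlinear eigenvalue: P(lam) is singular (equivalently, nontrivial left/right null vectors exist).\<close>
definition mp_eigenvalue :: "nat \<Rightarrow> nat \<Rightarrow> (nat \<Rightarrow> complex mat) \<Rightarrow> complex \<Rightarrow> bool" where
  "mp_eigenvalue n d C lam \<longleftrightarrow>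
     (\<exists>x \<in> carrier_vec n. x \<noteq> 0\<^sub>v n \<and> mp_eval n d C lam *\<^sub>v x = 0\<^sub>v n) \<and>
     (\<exists>y \<in> carrier_vec n. y \<noteq> 0\<^sub>v n \<and> (mp_eval n d C lam)\<^sup>T *\<^sub>v conjugate y = 0\<^sub>v n)"

definition right_alg_eigenspace :: "nat \<Rightarrow> nat \<Rightarrow> (nat \<Rightarrow> complex mat) \<Rightarrow> complex set \<Rightarrow> complex vec set" where
  "right_alg_eigenspace n d C Z = cspan n
     {v. \<exists>lam k x i. lam \<in> Z \<and> mp_eigenvalue n d C lam \<and> right_jordan_chain n d C lam k x \<and> i < k \<and> v = x i}"

definition left_alg_eigenspace :: "nat \<Rightarrow> nat \<Rightarrow> (nat \<Rightarrow> complex mat) \<Rightarrow> complex set \<Rightarrow> complex vec set" where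
  "left_alg_eigenspace n d C Z = cspan n
     {v. \<exists>lam k x i. lam \<in> Z \<and> mp_eigenvalue n d C lam \<and> left_jordan_chain n d C lam k x \<and> i < k \<and> v = x i}"

definition enclosed_by :: "(real \<Rightarrow> complex) \<Rightarrow> complex set" where
  "enclosed_by g = {z. z \<notin> path_image g \<and> winding_number g z = 1}"

text \<open>First companion linearization A - zB (size nd), indices i = r*n + a (block row r, offset a).\<close>
definition comp_A :: "nat \<Rightarrow> nat \<Rightarrow> (nat \<Rightarrow> complex mat) \<Rightarrow> complex mat" where
  "comp_A n d A = mat (n*d) (n*d) (\<lambda>(i,k).
     let r = i div n; a = i mod n; c = k div n; b = k mod n in
     if r + 1 < d then (if c = r + 1 \<and> a = b then 1 else 0)
     else A c $$ (a,b))"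

definition comp_B :: "nat \<Rightarrow> nat \<Rightarrow> (nat \<Rightarrow> complex mat) \<Rightarrow> complex mat" where
  "comp_B n d A = mat (n*d) (n*d) (\<lambda>(i,k).
     let r = i div n; a = i mod n; c = k div n; b = k mod n in
     if r + 1 < d then (if c = r \<and> a = b then 1 else 0)
     else (if c + 1 = d then - (A d $$ (a,b)) else 0))"

definition pencil_coeffs :: "complex mat \<Rightarrow> complex mat \<Rightarrow> nat \<Rightarrow> complex mat" where
  "pencil_coeffs AA BB j = (if j = 0 then - AA else BB)"

definition sel_first :: "nat \<Rightarrow> nat \<Rightarrow> complex mat" where
  "sel_first n d = mat n (n*d) (\<lambda>(a,k). if k = a then 1 else 0)"

definition sel_last :: "nat \<Rightarrow> nat \<Rightarrow> complex mat" where
  "sel_last n d = mat n (n*d) (\<lambda>(a,k). if k = (d - 1) * n + a then 1 else 0)"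

end

theory Submission
  imports Defs "HOL-Computational_Algebra.Polynomial_FPS"
begin

text \<open>
  A sequence \<open>x\<^sub>0, ..., x\<^sub>k\<^sub>-\<^sub>1\<close> is a right Jordan chain of \<open>P\<close> at \<open>lam\<close> exactly when its
  generating function \<open>x(t) = sum x\<^sub>j t\<^sup>j\<close> satisfies \<open>P(lam + t) x(t) = 0 mod t\<^sup>k\<close>; left chains are
  characterised in the same way by \<open>y(t)\<^sup>* P(lam + t) = 0 mod t\<^sup>k\<close>.

  For the first companion pencil \<open>zB - A\<close>, the first \<open>d - 1\<close> block rows say
  \<open>v\<^sub>r\<^sub>+\<^sub>1 = (lam + t) v\<^sub>r mod t\<^sup>k\<close>, so a right chain of the pencil is congruent to
  \<open>[x; (lam + t) x; ...; (lam + t)\<^sup>d\<^sup>-\<^sup>1 x]\<close> with \<open>x = F v\<close>, and on such a vector the last block row is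
  \<open>-P(lam + t) x(t)\<close>. Hence \<open>F\<close> maps right chains of the pencil onto right chains of \<open>P\<close>, the lift
  \<open>x \<mapsto> [(lam + t)\<^sup>r x]\<^sub>r\<close> being a right inverse. Dually, the block columns determine a left chain
  of the pencil modulo \<open>t\<^sup>k\<close> from its last block \<open>y = L w\<close>: the adjoint of block \<open>c < d - 1\<close>
  is \<open>-y\<^sup>* H\<^sub>c\<^sub>+\<^sub>1(lam + t)\<close> for the Horner shifts \<open>H\<^sub>c(z) = sum\<^sub>i\<^sub>\<ge>\<^sub>c z\<^sup>i\<^sup>-\<^sup>c A\<^sub>i\<close>, and the first
  block column then reduces to \<open>-y(t)\<^sup>* P(lam + t)\<close>.

  Chains of length one show that \<open>P\<close> and the pencil have the same eigenvalues, so \<open>F\<close> and \<open>L\<close> map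
  the generalized eigenvectors of the pencil onto those of \<open>P\<close>, and linear maps commute with spans.
\<close>

lemma fps_X_power_dvd_iff: "fps_X ^ k dvd f \<longleftrightarrow> (\<forall>j<k. f $ j = (0::'a::comm_ring_1))"
proof
  assume "fps_X ^ k dvd f"
  then obtain g where "f = fps_X ^ k * g" by (rule dvdE)
  then show "\<forall>j<k. f $ j = 0" by (simp add: fps_X_power_mult_nth)
next
  assume "\<forall>j<k. f $ j = 0"
  show "fps_X ^ k dvd f"
  proof (cases "f = 0")
    case False
    with \<open>\<forall>j<k. f $ j = 0\<close> have "k \<le> subdegree f" by (simp add: subdegree_geI)
    then have "f = fps_shift k f * fps_X ^ k" by (simp add: fps_shift_times_fps_X_power)
    then show ?thesis by (metis dvd_triv_right)
  qed simp
qed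

lemma fps_nth_linear_power:
  "(fps_const c + fps_X) ^ i $ l = of_nat (i choose l) * (c::'a::field) ^ (i - l)"
proof -
  have "(fps_const c + fps_X) ^ i = fps_of_poly ([:c, 1:] ^ i)"
    by (simp only: fps_of_poly_power fps_of_poly_linear add.commute)
  then have "(fps_const c + fps_X) ^ i $ l = coeff ([:c, 1:] ^ i) l"
    by (simp only: fps_of_poly_nth)
  also have "\<dots> = of_nat (i choose l) * c ^ (i - l)"
    by (cases "l \<le> i") (simp_all add: coeff_linear_poly_power coeff_eq_0 degree_linear_power binomial_eq_0)
  finally show ?thesis .
qed

lemma sum_blocks: "(\<Sum>i<n*(d::nat). f i) = (\<Sum>r<d. \<Sum>a<n. f (r*n + a))"
proof -
  have "sum f {r*n..<r*n + n} = (\<Sum>a<n. f (r*n + a))" for r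
    using sum.shift_bounds_nat_ivl[of f 0 "r*n" n] by (simp add: add.commute lessThan_atLeast0)
  then show ?thesis
    using sum.nat_group[of f n d] by (simp add: mult.commute)
qed

lemma block_index_less:
  assumes "r < d" "a < n"
  shows "r*n + a < n*(d::nat)"
proof -
  have "r*n + a < (r + 1) * n" using assms by simp
  also have "\<dots> \<le> d*n" using assms by (intro mult_le_mono1) simp
  finally show ?thesis by (simp add: mult.commute)
qed

lemma block_div [simp]: "a < n \<Longrightarrow> (r*n + a) div n = (r::nat)"
  by (simp add: add.commute[of "r*n"])

lemma block_mod [simp]: "a < n \<Longrightarrow> (r*n + a) mod n = (a::nat)"
  by (simp add: add.commute[of "r*n"])

lemma all_blocks: "(\<forall>i<n*(d::nat). P i) \<longleftrightarrow> (\<forall>r<d. \<forall>a<n. P (r*n + a))"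
proof -
  note block_index_less
  moreover have "i div n < d" "i mod n < n" if "i < n*d" for i
  proof -
    from that have "0 < n" by (cases n) auto
    with that show "i div n < d" "i mod n < n" by (simp_all add: less_mult_imp_div_less mult.commute)
  qed
  ultimately show ?thesis by (metis div_mult_mod_eq)
qed

lemma sum_blocks_delta:
  fixes c d b n :: nat
  assumes "c < d" "b < n"
  shows "(\<Sum>r<d. \<Sum>a<n. if r = c \<and> a = b then f r a else 0) = (f c b :: 'a::comm_monoid_add)"
proof -
  have "(\<Sum>r<d. \<Sum>a<n. if r = c \<and> a = b then f r a else 0) = (\<Sum>r<d. if r = c then f r b else 0)"
    using assms by (intro sum.cong) auto
  also have "\<dots> = f c b" using assms by simp
  finally show ?thesis .
qed

lemma sum_blocks_single:
  fixes c d n :: nat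
  assumes "c < d"
  shows "(\<Sum>r<d. \<Sum>a<n. if r = c then f r a else 0) = (\<Sum>a<n. f c a :: 'a::comm_monoid_add)"
  using assms by (subst sum.swap) simp

lemma mult_mat_vec_eq_0_iff:
  assumes "M \<in> carrier_mat m n" "v \<in> carrier_vec n"
  shows "M *\<^sub>v v = 0\<^sub>v m \<longleftrightarrow> (\<forall>a<m. (\<Sum>b<n. M $$ (a,b) * v $ b) = 0)"
  using assms by (auto simp: vec_eq_iff scalar_prod_def lessThan_atLeast0)

section \<open>Jordan chains as power series\<close>

definition chain_fps :: "(nat \<Rightarrow> complex vec) \<Rightarrow> nat \<Rightarrow> complex fps" where
  "chain_fps x b = Abs_fps (\<lambda>j. x j $ b)"

definition cnj_chain_fps :: "(nat \<Rightarrow> complex vec) \<Rightarrow> nat \<Rightarrow> complex fps" where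
  "cnj_chain_fps x a = Abs_fps (\<lambda>j. cnj (x j $ a))"

definition shifted_mp :: "nat \<Rightarrow> (nat \<Rightarrow> complex mat) \<Rightarrow> complex \<Rightarrow> nat \<Rightarrow> nat \<Rightarrow> complex fps" where
  "shifted_mp d C lam a b = (\<Sum>i\<le>d. fps_const (C i $$ (a,b)) * (fps_const lam + fps_X) ^ i)"

lemma shifted_mp_nth:
  assumes "a < n" "b < n"
  shows "shifted_mp d C lam a b $ l = mp_deriv n d C l lam $$ (a,b) / fact l"
proof -
  have fact_quotient: "(of_nat (fact i div fact (i - l)) :: complex) = fact l * of_nat (i choose l)"
    if "l \<le> i" for i
  proof -
    have "fact i div fact (i - l) = fact l * (i choose l)"
      using binomial_fact_lemma[OF that]
      by (metis fact_nonzero mult.assoc mult.commute nonzero_mult_div_cancel_left)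
    then show ?thesis by simp
  qed
  have "mp_deriv n d C l lam $$ (a,b) / fact l =
      (\<Sum>i\<in>{l..d}. C i $$ (a,b) * (of_nat (i choose l) * lam ^ (i - l)))"
    using assms by (auto simp: mp_deriv_def sum_divide_distrib fact_quotient intro!: sum.cong)
  also have "\<dots> = shifted_mp d C lam a b $ l"
    unfolding shifted_mp_def fps_sum_nth
    by (rule sum.mono_neutral_cong_left) (auto simp: fps_nth_linear_power binomial_eq_0)
  finally show ?thesis ..
qed

lemma right_jordan_chain_iff_dvd:
  "right_jordan_chain n d C lam k x \<longleftrightarrow> (\<forall>j<k. x j \<in> carrier_vec n) \<and>
     (\<forall>a<n. fps_X ^ k dvd (\<Sum>b<n. shifted_mp d C lam a b * chain_fps x b))"
proof -
  have "(\<Sum>b<n. shifted_mp d C lam a b * chain_fps x b) $ j =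
      (\<Sum>l\<le>j. (1 / fact l) * (\<Sum>b<n. mp_deriv n d C l lam $$ (a,b) * x (j - l) $ b))"
    if "a < n" for a j
  proof -
    have "(\<Sum>b<n. shifted_mp d C lam a b * chain_fps x b) $ j =
        (\<Sum>b<n. \<Sum>l\<le>j. mp_deriv n d C l lam $$ (a,b) / fact l * x (j - l) $ b)"
      using that by (auto simp: fps_sum_nth fps_mult_nth chain_fps_def shifted_mp_nth atLeast0AtMost
          intro!: sum.cong)
    also have "\<dots> = (\<Sum>l\<le>j. (1 / fact l) * (\<Sum>b<n. mp_deriv n d C l lam $$ (a,b) * x (j - l) $ b))"
      by (subst sum.swap) (simp add: sum_distrib_left)
    finally show ?thesis .
  qed
  then show ?thesis
    unfolding right_jordan_chain_def fps_X_power_dvd_iff by auto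
qed

lemma left_jordan_chain_iff_dvd:
  "left_jordan_chain n d C lam k x \<longleftrightarrow> (\<forall>j<k. x j \<in> carrier_vec n) \<and>
     (\<forall>b<n. fps_X ^ k dvd (\<Sum>a<n. cnj_chain_fps x a * shifted_mp d C lam a b))"
proof -
  have "(\<Sum>a<n. cnj_chain_fps x a * shifted_mp d C lam a b) $ j =
      (\<Sum>l\<le>j. (1 / fact l) * (\<Sum>a<n. cnj (x (j - l) $ a) * mp_deriv n d C l lam $$ (a,b)))"
    if "b < n" for b j
  proof -
    have "(\<Sum>a<n. cnj_chain_fps x a * shifted_mp d C lam a b) $ j =
        (\<Sum>a<n. \<Sum>l\<le>j. mp_deriv n d C l lam $$ (a,b) / fact l * cnj (x (j - l) $ a))"
      using that by (auto simp: mult.commute fps_sum_nth fps_mult_nth[of "shifted_mp d C lam _ b"]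
          cnj_chain_fps_def shifted_mp_nth atLeast0AtMost intro!: sum.cong)
    also have "\<dots> = (\<Sum>l\<le>j. (1 / fact l) * (\<Sum>a<n. cnj (x (j - l) $ a) * mp_deriv n d C l lam $$ (a,b)))"
      by (subst sum.swap) (simp add: sum_distrib_left mult.commute)
    finally show ?thesis .
  qed
  then show ?thesis
    unfolding left_jordan_chain_def fps_X_power_dvd_iff by auto
qed

lemma right_jordan_chain_cong:
  assumes "\<And>j. j < k \<Longrightarrow> x j = y j"
  shows "right_jordan_chain n d C lam k x \<longleftrightarrow> right_jordan_chain n d C lam k y"
  using assms unfolding right_jordan_chain_def by simp

lemma left_jordan_chain_cong:
  assumes "\<And>j. j < k \<Longrightarrow> x j = y j"
  shows "left_jordan_chain n d C lam k x \<longleftrightarrow> left_jordan_chain n d C lam k y"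
  using assms unfolding left_jordan_chain_def by simp

lemma mp_eval_carrier: "mp_eval n d C z \<in> carrier_mat n n"
  by (simp add: mp_eval_def)

lemma mp_deriv_0: "mp_deriv n d C 0 z = mp_eval n d C z"
  by (simp add: mp_deriv_def mp_eval_def atLeast0AtMost)

lemma right_jordan_chain_const_iff:
  "right_jordan_chain n d C lam 1 (\<lambda>_. x) \<longleftrightarrow> x \<in> carrier_vec n \<and> mp_eval n d C lam *\<^sub>v x = 0\<^sub>v n"
  by (auto simp: right_jordan_chain_def mp_deriv_0 mult_mat_vec_eq_0_iff[OF mp_eval_carrier])

lemma left_jordan_chain_const_iff:
  "left_jordan_chain n d C lam 1 (\<lambda>_. y) \<longleftrightarrow>
     y \<in> carrier_vec n \<and> (mp_eval n d C lam)\<^sup>T *\<^sub>v conjugate y = 0\<^sub>v n"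
  using mp_eval_carrier[of n d C lam]
  by (auto simp: left_jordan_chain_def mp_deriv_0 mult_mat_vec_eq_0_iff mult.commute)

lemma mp_eigenvalue_iff_chains:
  "mp_eigenvalue n d C lam \<longleftrightarrow>
     (\<exists>x. right_jordan_chain n d C lam 1 (\<lambda>_. x) \<and> x \<noteq> 0\<^sub>v n) \<and>
     (\<exists>y. left_jordan_chain n d C lam 1 (\<lambda>_. y) \<and> y \<noteq> 0\<^sub>v n)"
  unfolding mp_eigenvalue_def right_jordan_chain_const_iff left_jordan_chain_const_iff by blast

section \<open>The companion pencil in block coordinates\<close>

lemma dim_comp_A [simp]: "dim_row (comp_A n d A) = n*d" "dim_col (comp_A n d A) = n*d"
  by (simp_all add: comp_A_def)

lemma comp_A_block:
  assumes "r < d" "a < n" "c < d" "b < n"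
  shows "comp_A n d A $$ (r*n + a, c*n + b) =
    (if r + 1 < d then (if c = r + 1 \<and> a = b then 1 else 0) else A c $$ (a,b))"
  using assms block_index_less[OF assms(1,2)] block_index_less[OF assms(3,4)]
  by (simp add: comp_A_def Let_def)

lemma comp_B_block:
  assumes "r < d" "a < n" "c < d" "b < n"
  shows "comp_B n d A $$ (r*n + a, c*n + b) =
    (if r + 1 < d then (if c = r \<and> a = b then 1 else 0) else if c + 1 = d then - A d $$ (a,b) else 0)"
  using assms block_index_less[OF assms(1,2)] block_index_less[OF assms(3,4)]
  by (simp add: comp_B_def Let_def)

lemma comp_A_row_sum:
  fixes V :: "nat \<Rightarrow> complex fps"
  assumes "r < d" "a < n"
  shows "(\<Sum>i<n*d. fps_const (comp_A n d A $$ (r*n + a, i)) * V i) =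
    (if r + 1 < d then V ((r + 1)*n + a) else (\<Sum>c<d. \<Sum>b<n. fps_const (A c $$ (a,b)) * V (c*n + b)))"
proof (cases "r + 1 < d")
  case True
  have "(\<Sum>i<n*d. fps_const (comp_A n d A $$ (r*n + a, i)) * V i) =
      (\<Sum>c<d. \<Sum>b<n. if c = r + 1 \<and> b = a then V (c*n + b) else 0)"
    unfolding sum_blocks using assms True by (auto simp: comp_A_block intro!: sum.cong)
  with True assms show ?thesis by (simp add: sum_blocks_delta)
next
  case False
  then show ?thesis
    unfolding sum_blocks using assms by (auto simp: comp_A_block intro!: sum.cong)
qed

lemma comp_B_row_sum:
  fixes V :: "nat \<Rightarrow> complex fps"
  assumes "r < d" "a < n"
  shows "(\<Sum>i<n*d. fps_const (comp_B n d A $$ (r*n + a, i)) * V i) =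
    (if r + 1 < d then V (r*n + a) else - (\<Sum>b<n. fps_const (A d $$ (a,b)) * V ((d - 1)*n + b)))"
proof (cases "r + 1 < d")
  case True
  have "(\<Sum>i<n*d. fps_const (comp_B n d A $$ (r*n + a, i)) * V i) =
      (\<Sum>c<d. \<Sum>b<n. if c = r \<and> b = a then V (c*n + b) else 0)"
    unfolding sum_blocks using assms True
    by (auto simp: comp_B_block simp flip: fps_const_neg intro!: sum.cong)
  with True assms show ?thesis by (simp add: sum_blocks_delta)
next
  case False
  have "(\<Sum>i<n*d. fps_const (comp_B n d A $$ (r*n + a, i)) * V i) =
      (\<Sum>c<d. \<Sum>b<n. if c = d - 1 then - (fps_const (A d $$ (a,b)) * V (c*n + b)) else 0)"
    unfolding sum_blocks using assms False
    by (auto simp: comp_B_block simp flip: fps_const_neg intro!: sum.cong)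
  with False assms show ?thesis by (simp add: sum_blocks_single sum_negf)
qed

lemma comp_A_col_sum:
  fixes U :: "nat \<Rightarrow> complex fps"
  assumes "c < d" "b < n"
  shows "(\<Sum>i<n*d. U i * fps_const (comp_A n d A $$ (i, c*n + b))) =
    (if 0 < c then U ((c - 1)*n + b) else 0) + (\<Sum>a<n. U ((d - 1)*n + a) * fps_const (A c $$ (a,b)))"
proof -
  have "(\<Sum>i<n*d. U i * fps_const (comp_A n d A $$ (i, c*n + b))) =
      (\<Sum>r<d. \<Sum>a<n. (if r = c - 1 \<and> a = b then (if 0 < c then U (r*n + a) else 0) else 0)
         + (if r = d - 1 then U (r*n + a) * fps_const (A c $$ (a,b)) else 0))"
    unfolding sum_blocks using assms by (auto simp: comp_A_block intro!: sum.cong)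
  also have "\<dots> = (if 0 < c then U ((c - 1)*n + b) else 0)
      + (\<Sum>a<n. U ((d - 1)*n + a) * fps_const (A c $$ (a,b)))"
    using assms by (simp add: sum.distrib sum_blocks_delta sum_blocks_single)
  finally show ?thesis .
qed

lemma comp_B_col_sum:
  fixes U :: "nat \<Rightarrow> complex fps"
  assumes "c < d" "b < n"
  shows "(\<Sum>i<n*d. U i * fps_const (comp_B n d A $$ (i, c*n + b))) =
    (if c + 1 < d then U (c*n + b) else - (\<Sum>a<n. U ((d - 1)*n + a) * fps_const (A d $$ (a,b))))"
proof (cases "c + 1 < d")
  case True
  have "(\<Sum>i<n*d. U i * fps_const (comp_B n d A $$ (i, c*n + b))) =
      (\<Sum>r<d. \<Sum>a<n. if r = c \<and> a = b then U (r*n + a) else 0)"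
    unfolding sum_blocks using assms True
    by (auto simp: comp_B_block simp flip: fps_const_neg intro!: sum.cong)
  with True assms show ?thesis by (simp add: sum_blocks_delta)
next
  case False
  have "r = d - 1" if "r < d" "\<not> r + 1 < d" for r
    using that by linarith
  then have "(\<Sum>i<n*d. U i * fps_const (comp_B n d A $$ (i, c*n + b))) =
      (\<Sum>r<d. \<Sum>a<n. if r = d - 1 then - (U (r*n + a) * fps_const (A d $$ (a,b))) else 0)"
    unfolding sum_blocks using assms False
    by (auto simp: comp_B_block simp flip: fps_const_neg intro!: sum.cong)
  with False assms show ?thesis by (simp add: sum_blocks_single sum_negf)
qed

text \<open>The simplifier turns the degree \<open>1\<close> of the pencil into \<open>Suc 0\<close>, so the lemmas below about
  \<open>shifted_mp 1 (companion_pencil n d A)\<close> are instantiated explicitly rather than given to \<open>simp\<close>.\<close>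

abbreviation companion_pencil :: "nat \<Rightarrow> nat \<Rightarrow> (nat \<Rightarrow> complex mat) \<Rightarrow> nat \<Rightarrow> complex mat" where
  "companion_pencil n d A \<equiv> pencil_coeffs (comp_A n d A) (comp_B n d A)"

lemma shifted_pencil:
  assumes "i < dim_row AA" "j < dim_col AA"
  shows "shifted_mp 1 (pencil_coeffs AA BB) lam i j =
    fps_const (BB $$ (i,j)) * (fps_const lam + fps_X) - fps_const (AA $$ (i,j))"
  using assms by (simp add: shifted_mp_def pencil_coeffs_def atMost_Suc algebra_simps)

lemma companion_row_sum:
  fixes V :: "nat \<Rightarrow> complex fps"
  assumes "r < d" "a < n"
  shows "(\<Sum>i<n*d. shifted_mp 1 (companion_pencil n d A) lam (r*n + a) i * V i) =
    (if r + 1 < d then (fps_const lam + fps_X) * V (r*n + a) - V ((r + 1)*n + a)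
     else - ((fps_const lam + fps_X) * (\<Sum>b<n. fps_const (A d $$ (a,b)) * V ((d - 1)*n + b)))
       - (\<Sum>c<d. \<Sum>b<n. fps_const (A c $$ (a,b)) * V (c*n + b)))"
proof -
  have "(\<Sum>i<n*d. shifted_mp 1 (companion_pencil n d A) lam (r*n + a) i * V i) =
      (\<Sum>i<n*d. (fps_const lam + fps_X) * (fps_const (comp_B n d A $$ (r*n + a, i)) * V i)
        - fps_const (comp_A n d A $$ (r*n + a, i)) * V i)"
    using block_index_less[OF assms(1,2)]
    by (intro sum.cong refl, subst shifted_pencil) (simp_all add: algebra_simps)
  also have "\<dots> = (fps_const lam + fps_X) * (\<Sum>i<n*d. fps_const (comp_B n d A $$ (r*n + a, i)) * V i)
      - (\<Sum>i<n*d. fps_const (comp_A n d A $$ (r*n + a, i)) * V i)"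
    by (simp add: sum_subtractf sum_distrib_left)
  finally show ?thesis
    using assms by (simp add: comp_A_row_sum comp_B_row_sum)
qed

lemma companion_col_sum:
  fixes U :: "nat \<Rightarrow> complex fps"
  assumes "c < d" "b < n"
  shows "(\<Sum>i<n*d. U i * shifted_mp 1 (companion_pencil n d A) lam i (c*n + b)) =
    (if c + 1 < d then (fps_const lam + fps_X) * U (c*n + b)
     else - ((fps_const lam + fps_X) * (\<Sum>a<n. U ((d - 1)*n + a) * fps_const (A d $$ (a,b)))))
    - (if 0 < c then U ((c - 1)*n + b) else 0)
    - (\<Sum>a<n. U ((d - 1)*n + a) * fps_const (A c $$ (a,b)))"
proof -
  have "(\<Sum>i<n*d. U i * shifted_mp 1 (companion_pencil n d A) lam i (c*n + b)) =
      (\<Sum>i<n*d. (fps_const lam + fps_X) * (U i * fps_const (comp_B n d A $$ (i, c*n + b)))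
        - U i * fps_const (comp_A n d A $$ (i, c*n + b)))"
    using block_index_less[OF assms(1,2)]
    by (intro sum.cong refl, subst shifted_pencil) (simp_all add: algebra_simps)
  also have "\<dots> = (fps_const lam + fps_X) * (\<Sum>i<n*d. U i * fps_const (comp_B n d A $$ (i, c*n + b)))
      - (\<Sum>i<n*d. U i * fps_const (comp_A n d A $$ (i, c*n + b)))"
    by (simp add: sum_subtractf sum_distrib_left)
  finally show ?thesis
    using assms by (simp add: comp_A_col_sum comp_B_col_sum)
qed

section \<open>Right Jordan chains of the companion pencil\<close>

definition right_lift :: "nat \<Rightarrow> complex \<Rightarrow> (nat \<Rightarrow> complex fps) \<Rightarrow> nat \<Rightarrow> complex fps" where
  "right_lift n lam X i = (fps_const lam + fps_X) ^ (i div n) * X (i mod n)"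

lemma right_lift_block: "a < n \<Longrightarrow> right_lift n lam X (r*n + a) = (fps_const lam + fps_X) ^ r * X a"
  by (simp add: right_lift_def)

lemma companion_row_sum_right_lift:
  assumes "r < d" "a < n"
  shows "(\<Sum>i<n*d. shifted_mp 1 (companion_pencil n d A) lam (r*n + a) i * right_lift n lam X i) =
    (if r + 1 < d then 0 else - (\<Sum>b<n. shifted_mp d A lam a b * X b))"
proof (cases "r + 1 < d")
  case True
  then show ?thesis
    unfolding companion_row_sum[OF assms]
    using right_lift_block[OF assms(2), where r = r] right_lift_block[OF assms(2), where r = "r + 1"]
    by simp
next
  case False
  let ?s = "fps_const lam + fps_X"
  let ?T = "\<lambda>c. \<Sum>b<n. fps_const (A c $$ (a,b)) * (?s ^ c * X b)"
  from False assms obtain d' where d': "d = Suc d'" "r = d'" by (cases d) auto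
  have "(\<Sum>i<n*d. shifted_mp 1 (companion_pencil n d A) lam (r*n + a) i * right_lift n lam X i) =
      - (?s * (\<Sum>b<n. fps_const (A d $$ (a,b)) * (?s ^ d' * X b))) - (\<Sum>c<d. ?T c)"
    unfolding companion_row_sum[OF assms] using False d' by (simp add: right_lift_block)
  also have "?s * (\<Sum>b<n. fps_const (A d $$ (a,b)) * (?s ^ d' * X b)) = ?T d"
    by (simp add: sum_distrib_left d' algebra_simps)
  also have "- ?T d - (\<Sum>c<d. ?T c) = - (\<Sum>c\<le>d. ?T c)"
    by (simp add: lessThan_Suc_atMost[symmetric])
  also have "(\<Sum>c\<le>d. ?T c) = (\<Sum>b<n. shifted_mp d A lam a b * X b)"
    by (simp add: shifted_mp_def sum_distrib_left sum_distrib_right algebra_simps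
        sum.swap[of _ "{..<n}"])
  finally show ?thesis
    using False by simp
qed

lemma companion_right_lift_congruent:
  fixes V :: "nat \<Rightarrow> complex fps"
  assumes rows: "\<forall>i<n*d. fps_X ^ k dvd (\<Sum>i'<n*d. shifted_mp 1 (companion_pencil n d A) lam i i' * V i')"
  shows "\<forall>i<n*d. fps_X ^ k dvd V i - right_lift n lam V i"
  unfolding all_blocks
proof (intro allI impI)
  fix r a assume "r < d" "a < n"
  then show "fps_X ^ k dvd V (r*n + a) - right_lift n lam V (r*n + a)"
  proof (induction r)
    case 0
    then show ?case by (simp add: right_lift_def)
  next
    case (Suc r)
    let ?s = "fps_const lam + fps_X"
    have "r < d" using Suc.prems by simp
    have "fps_X ^ k dvd (\<Sum>i'<n*d. shifted_mp 1 (companion_pencil n d A) lam (r*n + a) i' * V i')"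
      using rows block_index_less[OF \<open>r < d\<close> \<open>a < n\<close>] by blast
    then have step: "fps_X ^ k dvd ?s * V (r*n + a) - V (Suc r * n + a)"
      unfolding companion_row_sum[OF \<open>r < d\<close> \<open>a < n\<close>] using Suc.prems by simp
    have "fps_X ^ k dvd V (r*n + a) - ?s ^ r * V a"
      using Suc \<open>r < d\<close> by (simp add: right_lift_block)
    then have "fps_X ^ k dvd
        ?s * (V (r*n + a) - ?s ^ r * V a) - (?s * V (r*n + a) - V (Suc r * n + a))"
      using step by (simp add: dvd_diff)
    then show ?case
      unfolding right_lift_block[OF \<open>a < n\<close>] by (simp add: algebra_simps)
  qed
qed

lemma sel_first_mult_vec:
  fixes v :: "complex vec"
  assumes "v \<in> carrier_vec (n*d)" "0 < d"
  shows "sel_first n d *\<^sub>v v = vec n (\<lambda>a. v $ a)"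
proof (rule eq_vecI)
  fix a assume "a < dim_vec (vec n (\<lambda>a. v $ a))"
  then have "a < n*d" using block_index_less[of 0 d a n] assms(2) by simp
  then show "(sel_first n d *\<^sub>v v) $ a = vec n (\<lambda>a. v $ a) $ a"
    using assms \<open>a < dim_vec _\<close>
    by (simp add: sel_first_def scalar_prod_def if_distrib[of "\<lambda>x. x * _"] cong: if_cong)
qed (simp add: sel_first_def)

definition lift_right_chain :: "nat \<Rightarrow> nat \<Rightarrow> complex \<Rightarrow> (nat \<Rightarrow> complex vec) \<Rightarrow> nat \<Rightarrow> complex vec" where
  "lift_right_chain n d lam x j = vec (n*d) (\<lambda>i. right_lift n lam (chain_fps x) i $ j)"

lemma chain_fps_lift_right_chain:
  "i < n*d \<Longrightarrow> chain_fps (lift_right_chain n d lam x) i = right_lift n lam (chain_fps x) i"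
  by (simp add: chain_fps_def lift_right_chain_def fps_nth_inverse)

lemma sel_first_lift_right_chain:
  assumes "0 < d" "x j \<in> carrier_vec n"
  shows "sel_first n d *\<^sub>v lift_right_chain n d lam x j = x j"
proof -
  have "a < n*d" if "a < n" for a using block_index_less[of 0 d a n] assms(1) that by simp
  then show ?thesis
    using assms by (auto simp: sel_first_mult_vec lift_right_chain_def right_lift_def chain_fps_def)
qed

lemma right_jordan_chain_lift:
  assumes "right_jordan_chain n d A lam k x"
  shows "right_jordan_chain (n*d) 1 (companion_pencil n d A) lam k (lift_right_chain n d lam x)"
  unfolding right_jordan_chain_iff_dvd all_blocks
proof (intro conjI allI impI)
  fix r a assume "r < d" "a < n"
  have "(\<Sum>i<n*d. shifted_mp 1 (companion_pencil n d A) lam (r*n + a) i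
          * chain_fps (lift_right_chain n d lam x) i)
      = (if r + 1 < d then 0 else - (\<Sum>b<n. shifted_mp d A lam a b * chain_fps x b))"
    unfolding companion_row_sum_right_lift[OF \<open>r < d\<close> \<open>a < n\<close>, symmetric]
    by (simp add: chain_fps_lift_right_chain)
  then show "fps_X ^ k dvd (\<Sum>i<n*d. shifted_mp 1 (companion_pencil n d A) lam (r*n + a) i
      * chain_fps (lift_right_chain n d lam x) i)"
    using assms \<open>a < n\<close> unfolding right_jordan_chain_iff_dvd by simp
qed (simp add: lift_right_chain_def)

lemma right_jordan_chain_project:
  assumes "right_jordan_chain (n*d) 1 (companion_pencil n d A) lam k v" "0 < d"
  shows "right_jordan_chain n d A lam k (\<lambda>j. sel_first n d *\<^sub>v v j)"
proof -
  let ?S = "shifted_mp 1 (companion_pencil n d A) lam" and ?V = "chain_fps v"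
  from assms(1) have carrier: "\<forall>j<k. v j \<in> carrier_vec (n*d)"
    and rows: "\<forall>i<n*d. fps_X ^ k dvd (\<Sum>i'<n*d. ?S i i' * ?V i')"
    unfolding right_jordan_chain_iff_dvd by auto
  have congruent: "\<forall>i<n*d. fps_X ^ k dvd ?V i - right_lift n lam ?V i"
    using rows by (rule companion_right_lift_congruent)
  have "fps_X ^ k dvd (\<Sum>b<n. shifted_mp d A lam a b * ?V b)" if "a < n" for a
  proof -
    let ?i = "(d - 1)*n + a"
    have i: "?i < n*d" using block_index_less[of "d - 1" d a n] assms(2) that by simp
    have "(\<Sum>i'<n*d. ?S ?i i' * ?V i') - (\<Sum>i'<n*d. ?S ?i i' * right_lift n lam ?V i') =
        (\<Sum>i'<n*d. ?S ?i i' * (?V i' - right_lift n lam ?V i'))"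
      by (simp add: right_diff_distrib sum_subtractf)
    moreover have "fps_X ^ k dvd (\<Sum>i'<n*d. ?S ?i i' * (?V i' - right_lift n lam ?V i'))"
      using congruent by (auto intro!: dvd_sum dvd_mult)
    ultimately have "fps_X ^ k dvd
        (\<Sum>i'<n*d. ?S ?i i' * ?V i') - (\<Sum>i'<n*d. ?S ?i i' * right_lift n lam ?V i')"
      by simp
    then have "fps_X ^ k dvd (\<Sum>i'<n*d. ?S ?i i' * right_lift n lam ?V i')"
      using rows i by (simp add: dvd_diff_right_iff)
    also have "(\<Sum>i'<n*d. ?S ?i i' * right_lift n lam ?V i') = - (\<Sum>b<n. shifted_mp d A lam a b * ?V b)"
      using assms(2) that by (subst companion_row_sum_right_lift) simp_all
    finally show ?thesis by simp
  qed
  then have "right_jordan_chain n d A lam k (\<lambda>j. vec n (\<lambda>a. v j $ a))"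
    unfolding right_jordan_chain_iff_dvd by (simp add: chain_fps_def)
  then show ?thesis
    using carrier assms(2) by (subst right_jordan_chain_cong) (simp_all add: sel_first_mult_vec)
qed

lemma right_jordan_chain_project_head:
  assumes "right_jordan_chain (n*d) 1 (companion_pencil n d A) lam k v" "0 < k" "0 < d"
    and "sel_first n d *\<^sub>v v 0 = 0\<^sub>v n"
  shows "v 0 = 0\<^sub>v (n*d)"
proof -
  let ?V = "chain_fps v"
  from assms(1) have carrier: "v 0 \<in> carrier_vec (n*d)"
    and rows: "\<forall>i<n*d. fps_X ^ k dvd (\<Sum>i'<n*d. shifted_mp 1 (companion_pencil n d A) lam i i' * ?V i')"
    using assms(2) unfolding right_jordan_chain_iff_dvd by auto
  have head: "v 0 $ a = 0" if "a < n" for a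
    using arg_cong[OF assms(4), of "\<lambda>w :: complex vec. w $ a"] carrier assms(3) that
    by (simp add: sel_first_mult_vec)
  have "v 0 $ i = 0" if "i < n*d" for i
  proof -
    have "(?V i - right_lift n lam ?V i) $ 0 = 0"
      using companion_right_lift_congruent[OF rows] that assms(2) by (simp add: fps_X_power_dvd_iff)
    moreover have "i mod n < n" using that by (cases n) auto
    ultimately show ?thesis by (simp add: right_lift_def chain_fps_def head)
  qed
  then show ?thesis using carrier by (intro eq_vecI) auto
qed

section \<open>Left Jordan chains of the companion pencil\<close>

definition horner_tail ::
  "nat \<Rightarrow> (nat \<Rightarrow> complex mat) \<Rightarrow> complex \<Rightarrow> nat \<Rightarrow> nat \<Rightarrow> nat \<Rightarrow> complex fps" where
  "horner_tail d A lam c a b = (\<Sum>i\<in>{c..d}. fps_const (A i $$ (a,b)) * (fps_const lam + fps_X) ^ (i - c))"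

lemma horner_tail_0: "horner_tail d A lam 0 a b = shifted_mp d A lam a b"
  by (simp add: horner_tail_def shifted_mp_def atLeast0AtMost)

lemma horner_tail_last: "horner_tail d A lam d a b = fps_const (A d $$ (a,b))"
  by (simp add: horner_tail_def)

lemma horner_tail_step:
  assumes "c \<le> d"
  shows "horner_tail d A lam c a b =
    fps_const (A c $$ (a,b)) + (fps_const lam + fps_X) * horner_tail d A lam (Suc c) a b"
proof -
  let ?s = "fps_const lam + fps_X" and ?a = "\<lambda>i. fps_const (A i $$ (a,b))"
  have "(\<Sum>i\<in>{Suc c..d}. ?a i * ?s ^ (i - c)) = ?s * (\<Sum>i\<in>{Suc c..d}. ?a i * ?s ^ (i - Suc c))"
    unfolding sum_distrib_left
  proof (intro sum.cong refl)
    fix i assume "i \<in> {Suc c..d}"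
    then have "i - c = Suc (i - Suc c)" by auto
    then show "?a i * ?s ^ (i - c) = ?s * (?a i * ?s ^ (i - Suc c))"
      by (simp only: power_Suc mult.left_commute)
  qed
  moreover have "{c..d} = insert c {Suc c..d}" using assms by auto
  ultimately show ?thesis
    unfolding horner_tail_def by simp
qed

definition left_lift ::
  "nat \<Rightarrow> nat \<Rightarrow> (nat \<Rightarrow> complex mat) \<Rightarrow> complex \<Rightarrow> (nat \<Rightarrow> complex fps) \<Rightarrow> nat \<Rightarrow> complex fps" where
  "left_lift n d A lam Y i = (if i div n + 1 < d
     then - (\<Sum>a<n. Y a * horner_tail d A lam (i div n + 1) a (i mod n)) else Y (i mod n))"

lemma left_lift_block:
  "b < n \<Longrightarrow> left_lift n d A lam Y (c*n + b) = (if c + 1 < d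
     then - (\<Sum>a<n. Y a * horner_tail d A lam (c + 1) a b) else Y b)"
  by (simp add: left_lift_def)

lemma companion_col_sum_left_lift:
  assumes "c < d" "b < n"
  shows "(\<Sum>i<n*d. left_lift n d A lam Y i * shifted_mp 1 (companion_pencil n d A) lam i (c*n + b)) =
    (if c = 0 then - (\<Sum>a<n. Y a * shifted_mp d A lam a b) else 0)"
proof -
  let ?s = "fps_const lam + fps_X"
  define W where "W c' = (\<Sum>a<n. Y a * horner_tail d A lam c' a b)" for c'
  have last: "left_lift n d A lam Y ((d - 1)*n + a) = Y a" if "a < n" for a
    using that assms(1) by (simp add: left_lift_block)
  have W_step: "W c = (\<Sum>a<n. Y a * fps_const (A c $$ (a,b))) + ?s * W (Suc c)"
    using assms(1) by (simp add: W_def horner_tail_step sum.distrib sum_distrib_left algebra_simps)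
  have B_part: "(if c + 1 < d then ?s * left_lift n d A lam Y (c*n + b)
      else - (?s * (\<Sum>a<n. left_lift n d A lam Y ((d - 1)*n + a) * fps_const (A d $$ (a,b))))) =
      - (?s * W (Suc c))"
  proof (cases "c + 1 < d")
    case False
    then have "Suc c = d" using assms(1) by simp
    then have "W (Suc c) = (\<Sum>a<n. Y a * fps_const (A d $$ (a,b)))"
      using assms(1) by (simp add: W_def horner_tail_last)
    moreover have "(\<Sum>a<n. left_lift n d A lam Y ((d - 1)*n + a) * fps_const (A d $$ (a,b))) =
        (\<Sum>a<n. Y a * fps_const (A d $$ (a,b)))"
      using last by simp
    ultimately show ?thesis using False by simp
  qed (use assms in \<open>simp add: left_lift_block W_def\<close>)
  have A_part:
    "(if 0 < c then left_lift n d A lam Y ((c - 1)*n + b) else 0) = (if 0 < c then - W c else 0)"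
    using assms by (simp add: left_lift_block W_def)
  have "(\<Sum>i<n*d. left_lift n d A lam Y i * shifted_mp 1 (companion_pencil n d A) lam i (c*n + b)) =
      - (?s * W (Suc c)) - (if 0 < c then - W c else 0) - (\<Sum>a<n. Y a * fps_const (A c $$ (a,b)))"
    unfolding companion_col_sum[OF assms] B_part A_part using last by simp
  also have "\<dots> = (if c = 0 then - W 0 else 0)"
    using W_step by (cases "c = 0") (simp_all add: algebra_simps)
  finally show ?thesis by (simp add: W_def horner_tail_0)
qed

lemma companion_left_lift_congruent:
  fixes U :: "nat \<Rightarrow> complex fps"
  assumes cols: "\<forall>i<n*d. fps_X ^ k dvd (\<Sum>i'<n*d. U i' * shifted_mp 1 (companion_pencil n d A) lam i' i)"
    and "0 < d"
  shows "\<forall>i<n*d. fps_X ^ k dvd U i - left_lift n d A lam (\<lambda>a. U ((d - 1)*n + a)) i"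
proof -
  let ?S = "shifted_mp 1 (companion_pencil n d A) lam" and ?s = "fps_const lam + fps_X"
  define D where "D i = U i - left_lift n d A lam (\<lambda>a. U ((d - 1)*n + a)) i" for i
  have D_last: "D ((d - 1)*n + a) = 0" if "a < n" for a
    using that by (simp add: D_def left_lift_block)
  have D_col: "fps_X ^ k dvd (\<Sum>i<n*d. D i * ?S i (c*n + b))" if "0 < c" "c < d" "b < n" for c b
  proof -
    have "(\<Sum>i<n*d. D i * ?S i (c*n + b)) =
        (\<Sum>i<n*d. U i * ?S i (c*n + b))
        - (\<Sum>i<n*d. left_lift n d A lam (\<lambda>a. U ((d - 1)*n + a)) i * ?S i (c*n + b))"
      by (simp add: D_def left_diff_distrib sum_subtractf)
    then show ?thesis
      using cols block_index_less[OF that(2,3)] companion_col_sum_left_lift[OF that(2,3)] that(1)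
      by simp
  qed
  \<comment> \<open>downward induction: block column \<open>Suc c\<close> determines block \<open>c\<close>\<close>
  have "\<forall>b<n. fps_X ^ k dvd D (c*n + b)" if "c \<le> d - 1" for c
    using that
  proof (induction rule: inc_induct)
    case base
    show ?case using D_last by simp
  next
    case (step c)
    show ?case
    proof (intro allI impI)
      fix b assume "b < n"
      have "Suc c < d" using step.hyps by simp
      have "fps_X ^ k dvd (\<Sum>i<n*d. D i * ?S i (Suc c * n + b))"
        using D_col[OF _ \<open>Suc c < d\<close> \<open>b < n\<close>] by simp
      also have "(\<Sum>i<n*d. D i * ?S i (Suc c * n + b)) =
          (if Suc c + 1 < d then ?s * D (Suc c * n + b) else 0) - D (c*n + b)"
        using companion_col_sum[OF \<open>Suc c < d\<close> \<open>b < n\<close>, of D] D_last by simp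
      finally show "fps_X ^ k dvd D (c*n + b)"
        using step.IH \<open>b < n\<close> by (auto simp: dvd_diff_right_iff dvd_diff_left_iff split: if_splits)
    qed
  qed
  then show ?thesis
    unfolding all_blocks D_def[symmetric] by simp
qed

lemma sel_last_mult_vec:
  fixes v :: "complex vec"
  assumes "v \<in> carrier_vec (n*d)" "0 < d"
  shows "sel_last n d *\<^sub>v v = vec n (\<lambda>a. v $ ((d - 1)*n + a))"
proof (rule eq_vecI)
  fix a assume "a < dim_vec (vec n (\<lambda>a. v $ ((d - 1)*n + a)))"
  then have "(d - 1)*n + a < n*d" using block_index_less[of "d - 1" d a n] assms(2) by simp
  then show "(sel_last n d *\<^sub>v v) $ a = vec n (\<lambda>a. v $ ((d - 1)*n + a)) $ a"
    using assms \<open>a < dim_vec _\<close>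
    by (simp add: sel_last_def scalar_prod_def if_distrib[of "\<lambda>x. x * _"] cong: if_cong)
qed (simp add: sel_last_def)

definition lift_left_chain ::
  "nat \<Rightarrow> nat \<Rightarrow> (nat \<Rightarrow> complex mat) \<Rightarrow> complex \<Rightarrow> (nat \<Rightarrow> complex vec) \<Rightarrow> nat \<Rightarrow> complex vec" where
  "lift_left_chain n d A lam x j = vec (n*d) (\<lambda>i. cnj (left_lift n d A lam (cnj_chain_fps x) i $ j))"

lemma cnj_chain_fps_lift_left_chain:
  "i < n*d \<Longrightarrow> cnj_chain_fps (lift_left_chain n d A lam x) i = left_lift n d A lam (cnj_chain_fps x) i"
  by (simp add: cnj_chain_fps_def lift_left_chain_def fps_nth_inverse)

lemma sel_last_lift_left_chain:
  assumes "0 < d" "x j \<in> carrier_vec n"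
  shows "sel_last n d *\<^sub>v lift_left_chain n d A lam x j = x j"
proof -
  have "(d - 1)*n + a < n*d" if "a < n" for a
    using block_index_less[of "d - 1" d a n] assms(1) that by simp
  then show ?thesis
    using assms by (auto simp: sel_last_mult_vec lift_left_chain_def left_lift_block cnj_chain_fps_def)
qed

lemma left_jordan_chain_lift:
  assumes "left_jordan_chain n d A lam k x"
  shows "left_jordan_chain (n*d) 1 (companion_pencil n d A) lam k (lift_left_chain n d A lam x)"
  unfolding left_jordan_chain_iff_dvd all_blocks
proof (intro conjI allI impI)
  fix c b assume "c < d" "b < n"
  have "(\<Sum>i<n*d. cnj_chain_fps (lift_left_chain n d A lam x) i
          * shifted_mp 1 (companion_pencil n d A) lam i (c*n + b))
      = (if c = 0 then - (\<Sum>a<n. cnj_chain_fps x a * shifted_mp d A lam a b) else 0)"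
    unfolding companion_col_sum_left_lift[OF \<open>c < d\<close> \<open>b < n\<close>, symmetric]
    by (simp add: cnj_chain_fps_lift_left_chain)
  then show "fps_X ^ k dvd (\<Sum>i<n*d. cnj_chain_fps (lift_left_chain n d A lam x) i
      * shifted_mp 1 (companion_pencil n d A) lam i (c*n + b))"
    using assms \<open>b < n\<close> unfolding left_jordan_chain_iff_dvd by simp
qed (simp add: lift_left_chain_def)

lemma left_jordan_chain_project:
  assumes "left_jordan_chain (n*d) 1 (companion_pencil n d A) lam k w" "0 < d"
  shows "left_jordan_chain n d A lam k (\<lambda>j. sel_last n d *\<^sub>v w j)"
proof -
  let ?S = "shifted_mp 1 (companion_pencil n d A) lam" and ?U = "cnj_chain_fps w"
  let ?L = "left_lift n d A lam (\<lambda>a. ?U ((d - 1)*n + a))"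
  from assms(1) have carrier: "\<forall>j<k. w j \<in> carrier_vec (n*d)"
    and cols: "\<forall>i<n*d. fps_X ^ k dvd (\<Sum>i'<n*d. ?U i' * ?S i' i)"
    unfolding left_jordan_chain_iff_dvd by auto
  have congruent: "\<forall>i<n*d. fps_X ^ k dvd ?U i - ?L i"
    using cols assms(2) by (rule companion_left_lift_congruent)
  have "fps_X ^ k dvd (\<Sum>a<n. ?U ((d - 1)*n + a) * shifted_mp d A lam a b)" if "b < n" for b
  proof -
    have b: "b < n*d" using block_index_less[of 0 d b n] assms(2) that by simp
    have "(\<Sum>i<n*d. ?U i * ?S i b) - (\<Sum>i<n*d. ?L i * ?S i b) = (\<Sum>i<n*d. (?U i - ?L i) * ?S i b)"
      by (simp add: left_diff_distrib sum_subtractf)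
    moreover have "fps_X ^ k dvd (\<Sum>i<n*d. (?U i - ?L i) * ?S i b)"
      using congruent by (auto intro!: dvd_sum dvd_mult2)
    ultimately have "fps_X ^ k dvd (\<Sum>i<n*d. ?U i * ?S i b) - (\<Sum>i<n*d. ?L i * ?S i b)"
      by simp
    then have "fps_X ^ k dvd (\<Sum>i<n*d. ?L i * ?S i b)"
      using cols b by (simp add: dvd_diff_right_iff)
    also have "(\<Sum>i<n*d. ?L i * ?S i b) = - (\<Sum>a<n. ?U ((d - 1)*n + a) * shifted_mp d A lam a b)"
      using companion_col_sum_left_lift[of 0 d b n] assms(2) that by simp
    finally show ?thesis by simp
  qed
  then have "left_jordan_chain n d A lam k (\<lambda>j. vec n (\<lambda>a. w j $ ((d - 1)*n + a)))"
    unfolding left_jordan_chain_iff_dvd by (simp add: cnj_chain_fps_def)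
  then show ?thesis
    using carrier assms(2) by (subst left_jordan_chain_cong) (simp_all add: sel_last_mult_vec)
qed

lemma left_jordan_chain_project_head:
  assumes "left_jordan_chain (n*d) 1 (companion_pencil n d A) lam k w" "0 < k" "0 < d"
    and "sel_last n d *\<^sub>v w 0 = 0\<^sub>v n"
  shows "w 0 = 0\<^sub>v (n*d)"
proof -
  let ?U = "cnj_chain_fps w"
  from assms(1) have carrier: "w 0 \<in> carrier_vec (n*d)"
    and cols: "\<forall>i<n*d. fps_X ^ k dvd (\<Sum>i'<n*d. ?U i' * shifted_mp 1 (companion_pencil n d A) lam i' i)"
    using assms(2) unfolding left_jordan_chain_iff_dvd by auto
  have head: "w 0 $ ((d - 1)*n + a) = 0" if "a < n" for a
    using arg_cong[OF assms(4), of "\<lambda>v :: complex vec. v $ a"] carrier assms(3) that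
    by (simp add: sel_last_mult_vec)
  have "w 0 $ i = 0" if "i < n*d" for i
  proof -
    have "(?U i - left_lift n d A lam (\<lambda>a. ?U ((d - 1)*n + a)) i) $ 0 = 0"
      using companion_left_lift_congruent[OF cols assms(3)] that assms(2)
      by (simp add: fps_X_power_dvd_iff)
    moreover have "i mod n < n" using that by (cases n) auto
    ultimately show ?thesis
      using head by (simp add: left_lift_def cnj_chain_fps_def fps_sum_nth split: if_split_asm)
  qed
  then show ?thesis using carrier by (intro eq_vecI) auto
qed

section \<open>Eigenvalues and algebraic eigenspaces\<close>

lemma sel_first_carrier: "sel_first n d \<in> carrier_mat n (n*d)"
  by (simp add: sel_first_def)

lemma sel_last_carrier: "sel_last n d \<in> carrier_mat n (n*d)"
  by (simp add: sel_last_def)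

lemma companion_right_eigenvector_iff:
  assumes "0 < d"
  shows "(\<exists>v. right_jordan_chain (n*d) 1 (companion_pencil n d A) lam 1 (\<lambda>_. v) \<and> v \<noteq> 0\<^sub>v (n*d)) \<longleftrightarrow>
    (\<exists>x. right_jordan_chain n d A lam 1 (\<lambda>_. x) \<and> x \<noteq> 0\<^sub>v n)"
  (is "?pencil \<longleftrightarrow> ?poly")
proof
  assume ?pencil
  then obtain v where
    v: "right_jordan_chain (n*d) 1 (companion_pencil n d A) lam 1 (\<lambda>_. v)" "v \<noteq> 0\<^sub>v (n*d)"
    by blast
  have "right_jordan_chain n d A lam 1 (\<lambda>_. sel_first n d *\<^sub>v v)"
    using right_jordan_chain_project[OF v(1) assms] .
  moreover have "sel_first n d *\<^sub>v v \<noteq> 0\<^sub>v n"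
    using right_jordan_chain_project_head[OF v(1) _ assms] v(2) by auto
  ultimately show ?poly by blast
next
  assume ?poly
  then obtain x where x: "right_jordan_chain n d A lam 1 (\<lambda>_. x)" "x \<noteq> 0\<^sub>v n" by blast
  let ?v = "lift_right_chain n d lam (\<lambda>_. x) 0"
  have "right_jordan_chain (n*d) 1 (companion_pencil n d A) lam 1 (\<lambda>_. ?v)"
    using right_jordan_chain_lift[OF x(1)] by (subst right_jordan_chain_cong) auto
  moreover have "sel_first n d *\<^sub>v ?v = x"
    using sel_first_lift_right_chain[OF assms, of "\<lambda>_. x"] x(1) right_jordan_chain_const_iff by blast
  then have "?v \<noteq> 0\<^sub>v (n*d)"
    using x(2) mult_mat_vec_eq_0_iff[OF sel_first_carrier zero_carrier_vec] by auto
  ultimately show ?pencil by blast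
qed

lemma companion_left_eigenvector_iff:
  assumes "0 < d"
  shows "(\<exists>w. left_jordan_chain (n*d) 1 (companion_pencil n d A) lam 1 (\<lambda>_. w) \<and> w \<noteq> 0\<^sub>v (n*d)) \<longleftrightarrow>
    (\<exists>y. left_jordan_chain n d A lam 1 (\<lambda>_. y) \<and> y \<noteq> 0\<^sub>v n)"
  (is "?pencil \<longleftrightarrow> ?poly")
proof
  assume ?pencil
  then obtain w where
    w: "left_jordan_chain (n*d) 1 (companion_pencil n d A) lam 1 (\<lambda>_. w)" "w \<noteq> 0\<^sub>v (n*d)"
    by blast
  have "left_jordan_chain n d A lam 1 (\<lambda>_. sel_last n d *\<^sub>v w)"
    using left_jordan_chain_project[OF w(1) assms] .
  moreover have "sel_last n d *\<^sub>v w \<noteq> 0\<^sub>v n"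
    using left_jordan_chain_project_head[OF w(1) _ assms] w(2) by auto
  ultimately show ?poly by blast
next
  assume ?poly
  then obtain y where y: "left_jordan_chain n d A lam 1 (\<lambda>_. y)" "y \<noteq> 0\<^sub>v n" by blast
  let ?w = "lift_left_chain n d A lam (\<lambda>_. y) 0"
  have "left_jordan_chain (n*d) 1 (companion_pencil n d A) lam 1 (\<lambda>_. ?w)"
    using left_jordan_chain_lift[OF y(1)] by (subst left_jordan_chain_cong) auto
  moreover have "sel_last n d *\<^sub>v ?w = y"
    using sel_last_lift_left_chain[OF assms, of "\<lambda>_. y"] y(1) left_jordan_chain_const_iff by blast
  then have "?w \<noteq> 0\<^sub>v (n*d)"
    using y(2) mult_mat_vec_eq_0_iff[OF sel_last_carrier zero_carrier_vec] by auto
  ultimately show ?pencil by blast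
qed

lemma mp_eigenvalue_companion_iff:
  "0 < d \<Longrightarrow> mp_eigenvalue (n*d) 1 (companion_pencil n d A) lam \<longleftrightarrow> mp_eigenvalue n d A lam"
  unfolding mp_eigenvalue_iff_chains
  by (simp only: companion_right_eigenvector_iff companion_left_eigenvector_iff)

definition right_generalized_eigenvectors ::
  "nat \<Rightarrow> nat \<Rightarrow> (nat \<Rightarrow> complex mat) \<Rightarrow> complex set \<Rightarrow> complex vec set" where
  "right_generalized_eigenvectors n d C Z = {v. \<exists>lam k x i. lam \<in> Z \<and> mp_eigenvalue n d C lam \<and>
     right_jordan_chain n d C lam k x \<and> i < k \<and> v = x i}"

definition left_generalized_eigenvectors ::
  "nat \<Rightarrow> nat \<Rightarrow> (nat \<Rightarrow> complex mat) \<Rightarrow> complex set \<Rightarrow> complex vec set" where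
  "left_generalized_eigenvectors n d C Z = {v. \<exists>lam k x i. lam \<in> Z \<and> mp_eigenvalue n d C lam \<and>
     left_jordan_chain n d C lam k x \<and> i < k \<and> v = x i}"

lemma right_generalized_eigenvectors_carrier: "right_generalized_eigenvectors n d C Z \<subseteq> carrier_vec n"
  by (auto simp: right_generalized_eigenvectors_def right_jordan_chain_def)

lemma left_generalized_eigenvectors_carrier: "left_generalized_eigenvectors n d C Z \<subseteq> carrier_vec n"
  by (auto simp: left_generalized_eigenvectors_def left_jordan_chain_def)

lemma right_generalized_eigenvectors_companion:
  assumes "0 < d"
  shows "(\<lambda>y. sel_first n d *\<^sub>v y) ` right_generalized_eigenvectors (n*d) 1 (companion_pencil n d A) Z =
    right_generalized_eigenvectors n d A Z" (is "?F ` ?G = _")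
proof (intro equalityI subsetI)
  fix u assume "u \<in> ?F ` ?G"
  then show "u \<in> right_generalized_eigenvectors n d A Z"
    unfolding right_generalized_eigenvectors_def mp_eigenvalue_companion_iff[OF assms]
    using right_jordan_chain_project[OF _ assms] by blast
next
  fix u assume "u \<in> right_generalized_eigenvectors n d A Z"
  then obtain lam k x i where lam: "lam \<in> Z" "mp_eigenvalue n d A lam"
    and x: "right_jordan_chain n d A lam k x" "i < k" "u = x i"
    unfolding right_generalized_eigenvectors_def by blast
  have "u = sel_first n d *\<^sub>v lift_right_chain n d lam x i"
    using sel_first_lift_right_chain[OF assms] x unfolding right_jordan_chain_def by simp
  moreover have "lift_right_chain n d lam x i \<in> ?G"
    unfolding right_generalized_eigenvectors_def mp_eigenvalue_companion_iff[OF assms]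
    using lam x right_jordan_chain_lift[OF x(1)] by blast
  ultimately show "u \<in> ?F ` ?G" by blast
qed

lemma left_generalized_eigenvectors_companion:
  assumes "0 < d"
  shows "(\<lambda>y. sel_last n d *\<^sub>v y) ` left_generalized_eigenvectors (n*d) 1 (companion_pencil n d A) Z =
    left_generalized_eigenvectors n d A Z" (is "?F ` ?G = _")
proof (intro equalityI subsetI)
  fix u assume "u \<in> ?F ` ?G"
  then show "u \<in> left_generalized_eigenvectors n d A Z"
    unfolding left_generalized_eigenvectors_def mp_eigenvalue_companion_iff[OF assms]
    using left_jordan_chain_project[OF _ assms] by blast
next
  fix u assume "u \<in> left_generalized_eigenvectors n d A Z"
  then obtain lam k x i where lam: "lam \<in> Z" "mp_eigenvalue n d A lam"
    and x: "left_jordan_chain n d A lam k x" "i < k" "u = x i"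
    unfolding left_generalized_eigenvectors_def by blast
  have "u = sel_last n d *\<^sub>v lift_left_chain n d A lam x i"
    using sel_last_lift_left_chain[OF assms] x unfolding left_jordan_chain_def by simp
  moreover have "lift_left_chain n d A lam x i \<in> ?G"
    unfolding left_generalized_eigenvectors_def mp_eigenvalue_companion_iff[OF assms]
    using lam x left_jordan_chain_lift[OF x(1)] by blast
  ultimately show "u \<in> ?F ` ?G" by blast
qed

lemma right_alg_eigenspace_eq:
  "right_alg_eigenspace n d C Z = cspan n (right_generalized_eigenvectors n d C Z)"
  by (simp add: right_alg_eigenspace_def right_generalized_eigenvectors_def)

lemma left_alg_eigenspace_eq:
  "left_alg_eigenspace n d C Z = cspan n (left_generalized_eigenvectors n d C Z)"
  by (simp add: left_alg_eigenspace_def left_generalized_eigenvectors_def)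

lemma mult_mat_vec_lincomb:
  fixes M :: "'a::comm_semiring_0 mat"
  assumes "M \<in> carrier_mat m N" "\<forall>i<k. w i \<in> carrier_vec N"
  shows "M *\<^sub>v vec N (\<lambda>a. \<Sum>i<k. c i * w i $ a) = vec m (\<lambda>b. \<Sum>i<k. c i * (M *\<^sub>v w i) $ b)"
proof (rule eq_vecI)
  fix b assume "b < dim_vec (vec m (\<lambda>b. \<Sum>i<k. c i * (M *\<^sub>v w i) $ b))"
  then have "b < m" by simp
  have dims: "\<And>i. i < k \<Longrightarrow> dim_vec (w i) = N" using assms(2) by auto
  have "(M *\<^sub>v vec N (\<lambda>a. \<Sum>i<k. c i * w i $ a)) $ b = (\<Sum>a<N. M $$ (b,a) * (\<Sum>i<k. c i * w i $ a))"
    using assms(1) \<open>b < m\<close> by (simp add: scalar_prod_def lessThan_atLeast0)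
  also have "\<dots> = (\<Sum>a<N. \<Sum>i<k. c i * (M $$ (b,a) * w i $ a))"
    by (simp add: sum_distrib_left mult.left_commute)
  also have "\<dots> = (\<Sum>i<k. c i * (\<Sum>a<N. M $$ (b,a) * w i $ a))"
    by (subst sum.swap) (simp add: sum_distrib_left)
  also have "\<dots> = (\<Sum>i<k. c i * (M *\<^sub>v w i) $ b)"
    using assms(1) \<open>b < m\<close> dims by (simp add: scalar_prod_def lessThan_atLeast0)
  finally show "(M *\<^sub>v vec N (\<lambda>a. \<Sum>i<k. c i * w i $ a)) $ b = vec m (\<lambda>b. \<Sum>i<k. c i * (M *\<^sub>v w i) $ b) $ b"
    using \<open>b < m\<close> by simp
qed (use assms in simp)

lemma cspan_lincomb:
  fixes w :: "nat \<Rightarrow> complex vec"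
  assumes "\<forall>i<k. w i \<in> S"
  shows "vec n (\<lambda>a. \<Sum>i<k. c i * w i $ a) \<in> cspan n S"
  unfolding cspan_def using assms by blast

lemma cspanE:
  assumes "v \<in> cspan n S"
  obtains k c and w :: "nat \<Rightarrow> complex vec" where "\<forall>i<k. w i \<in> S" "v = vec n (\<lambda>a. \<Sum>i<k. c i * w i $ a)"
  using assms unfolding cspan_def by blast

lemma mult_mat_vec_image_cspan:
  fixes M :: "complex mat"
  assumes "M \<in> carrier_mat m N" "S \<subseteq> carrier_vec N"
  shows "(\<lambda>y. M *\<^sub>v y) ` cspan N S = cspan m ((\<lambda>y. M *\<^sub>v y) ` S)"
proof (intro equalityI subsetI)
  fix u assume "u \<in> (\<lambda>y. M *\<^sub>v y) ` cspan N S"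
  then obtain v where v_in: "v \<in> cspan N S" and u: "u = M *\<^sub>v v" by blast
  from v_in obtain k c and w :: "nat \<Rightarrow> complex vec"
    where w: "\<forall>i<k. w i \<in> S" and v: "v = vec N (\<lambda>a. \<Sum>i<k. c i * w i $ a)"
    by (blast elim: cspanE)
  have "\<forall>i<k. w i \<in> carrier_vec N" using w assms(2) by blast
  then have "u = vec m (\<lambda>b. \<Sum>i<k. c i * (M *\<^sub>v w i) $ b)"
    unfolding u v by (rule mult_mat_vec_lincomb[OF assms(1)])
  then show "u \<in> cspan m ((\<lambda>y. M *\<^sub>v y) ` S)"
    using cspan_lincomb[of k "\<lambda>i. M *\<^sub>v w i"] w by simp
next
  fix u assume "u \<in> cspan m ((\<lambda>y. M *\<^sub>v y) ` S)"
  then obtain k c and w' :: "nat \<Rightarrow> complex vec" where w': "\<forall>i<k. w' i \<in> (\<lambda>y. M *\<^sub>v y) ` S"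
    and u: "u = vec m (\<lambda>b. \<Sum>i<k. c i * w' i $ b)"
    by (blast elim: cspanE)
  have "\<exists>w. \<forall>i. i < k \<longrightarrow> w i \<in> S \<and> w' i = M *\<^sub>v w i"
    by (rule choice) (use w' in blast)
  then obtain w where w: "\<forall>i<k. w i \<in> S" "\<forall>i<k. w' i = M *\<^sub>v w i" by blast
  have carrier: "\<forall>i<k. w i \<in> carrier_vec N" using w(1) assms(2) by blast
  have "M *\<^sub>v vec N (\<lambda>a. \<Sum>i<k. c i * w i $ a) = u"
    unfolding u mult_mat_vec_lincomb[OF assms(1) carrier] using w(2) by simp
  then show "u \<in> (\<lambda>y. M *\<^sub>v y) ` cspan N S"
    using cspan_lincomb[OF w(1)] by blast
qed

lemma not_mp_eigenvalue_dim_0: "\<not> mp_eigenvalue 0 d C lam"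
  unfolding mp_eigenvalue_def by (metis carrier_vecD vec_of_dim_0)

lemma not_mp_eigenvalue_degree_0:
  assumes "det (mp_eval n 0 A z) \<noteq> 0"
  shows "\<not> mp_eigenvalue n 0 A lam"
proof
  assume "mp_eigenvalue n 0 A lam"
  then obtain x where "x \<in> carrier_vec n" "x \<noteq> 0\<^sub>v n" "mp_eval n 0 A lam *\<^sub>v x = 0\<^sub>v n"
    unfolding mp_eigenvalue_def by blast
  moreover have "mp_eval n 0 A lam = mp_eval n 0 A z" by (simp add: mp_eval_def)
  ultimately have "det (mp_eval n 0 A z) = 0"
    unfolding det_0_iff_vec_prod_zero[OF mp_eval_carrier] by auto
  with assms show False ..
qed

theorem theorem2p1:
  fixes n d :: nat and A :: "nat \<Rightarrow> complex mat" and \<Gamma> :: "real \<Rightarrow> complex"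
  assumes "\<forall>j\<le>d. A j \<in> carrier_mat n n"
    and "A d \<noteq> 0\<^sub>m n n"
    and "\<exists>z. det (mp_eval n d A z) \<noteq> 0"
    and "valid_path \<Gamma>" and "simple_path \<Gamma>" and "pathfinish \<Gamma> = pathstart \<Gamma>"
    and "\<forall>z. z \<notin> path_image \<Gamma> \<longrightarrow> winding_number \<Gamma> z = 0 \<or> winding_number \<Gamma> z = 1"
    and "\<forall>z\<in>path_image \<Gamma>. \<not> mp_eigenvalue n d A z"
  shows "right_alg_eigenspace n d A (enclosed_by \<Gamma>) =
           (\<lambda>y. sel_first n d *\<^sub>v y) `
             right_alg_eigenspace (n*d) 1 (pencil_coeffs (comp_A n d A) (comp_B n d A)) (enclosed_by \<Gamma>) \<and>
         left_alg_eigenspace n d A (enclosed_by \<Gamma>) =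
           (\<lambda>y. sel_last n d *\<^sub>v y) `
             left_alg_eigenspace (n*d) 1 (pencil_coeffs (comp_A n d A) (comp_B n d A)) (enclosed_by \<Gamma>)"
proof -
  \<comment> \<open>Chains correspond eigenvalue by eigenvalue, so the contour only names the set of eigenvalues;
    of the hypotheses only the regularity of \<open>P\<close> is needed, and only when \<open>d = 0\<close>.\<close>
  let ?Z = "enclosed_by \<Gamma>"
  have "(\<lambda>y. sel_first n d *\<^sub>v y) ` right_generalized_eigenvectors (n*d) 1 (companion_pencil n d A) ?Z =
      right_generalized_eigenvectors n d A ?Z \<and>
    (\<lambda>y. sel_last n d *\<^sub>v y) ` left_generalized_eigenvectors (n*d) 1 (companion_pencil n d A) ?Z =
      left_generalized_eigenvectors n d A ?Z"
  proof (cases "d = 0")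
    case True
    with assms(3) show ?thesis
      by (auto simp: right_generalized_eigenvectors_def left_generalized_eigenvectors_def
          not_mp_eigenvalue_dim_0 not_mp_eigenvalue_degree_0)
  next
    case False
    then show ?thesis
      using right_generalized_eigenvectors_companion left_generalized_eigenvectors_companion by blast
  qed
  then show ?thesis
    unfolding right_alg_eigenspace_eq left_alg_eigenspace_eq
      mult_mat_vec_image_cspan[OF sel_first_carrier right_generalized_eigenvectors_carrier]
      mult_mat_vec_image_cspan[OF sel_last_carrier left_generalized_eigenvectors_carrier]
    by simp
qed

end
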